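(* Let $(X,d)$ be an $F$-space with non-decreasing metric $d$ and let $\{A_n\}$ be an approximation scheme on $X$. Suppose there exist an infinite set $\mathbb{N}_0\subseteq\mathbb{N}$, a bounded subset $\{x_n\}_{n\in\mathbb{N}_0}$ of $X$ and $c>0$ such that $c\le E(x_n,A_n)$ for all $n\in\mathbb{N}_0$. Then $\{A_n\}$ satisfies Shapiro's theorem on $X$.
   Context: An $F$-space is a complete metric vector space with translation-invariant metric $d$; $d$ is non-decreasing if $d(\alpha x,0)\le d(x,0)$ for $0\le\alpha\le1$. A subset $A\subseteq X$ is bounded (in the topological vector space sense) if for every $r>0$ there exists $\lambda>0$ with $A\subseteq\lambda B(0,r)$, where $B(0,r)=\{y:d(y,0)\le r\}$. An approximation scheme on $X$ is a chain $A_0\subsetneq A_1\subsetneq\cdots\subsetneq X$ of subsets with: (A1) there is $K:\mathbb{N}\to\mathbb{N}$, $K(n)\ge n$, $A_n+A_n\subseteq A_{K(n)}$; (A2) $\lambda A_n\subseteq A_n$ for all scalars $\lambda$; (A3) $\bigcup_nA_n$ dense in $X$. $E(x,A)=\inf_{a\in A}d(x,a)$. $\{A_n\}$ satisfies Shapiro's theorem on $X$ if for every non-increasing sequence $\{\varepsilon_n\}$ of nonnegative reals tending to $0$ there exists $x\in X$ with $E(x,A_n)\neq\mathbf{O}(\varepsilon_n)$. *)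

theory Defs
  imports "HOL-Analysis.Analysis" "HOL-Library.Landau_Symbols"
begin

text \<open>Metrics on a real vector space, given as an explicit function d (not the
 norm-induced dist of the type class).\<close>

definition is_metric :: "('a \<Rightarrow> 'a \<Rightarrow> real) \<Rightarrow> bool" where
  "is_metric d \<longleftrightarrow>
     (\<forall>x y. 0 \<le> d x y) \<and> (\<forall>x y. d x y = 0 \<longleftrightarrow> x = y) \<and>
     (\<forall>x y. d x y = d y x) \<and> (\<forall>x y z. d x z \<le> d x y + d y z)"

definition d_converges :: "('a \<Rightarrow> 'a \<Rightarrow> real) \<Rightarrow> (nat \<Rightarrow> 'a) \<Rightarrow> 'a \<Rightarrow> bool" where
  "d_converges d s l \<longleftrightarrow> (\<lambda>n. d (s n) l) \<longlonglongrightarrow> 0"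

definition d_Cauchy :: "('a \<Rightarrow> 'a \<Rightarrow> real) \<Rightarrow> (nat \<Rightarrow> 'a) \<Rightarrow> bool" where
  "d_Cauchy d s \<longleftrightarrow> (\<forall>e>0. \<exists>N. \<forall>m\<ge>N. \<forall>n\<ge>N. d (s m) (s n) < e)"

text \<open>F-space: complete metric (real) vector space with translation-invariant metric,
 whose vector operations are continuous (addition is automatically continuous by
 translation invariance; scalar multiplication is required to be jointly continuous).\<close>

definition F_space :: "('a::real_vector \<Rightarrow> 'a \<Rightarrow> real) \<Rightarrow> bool" where
  "F_space d \<longleftrightarrow>
     is_metric d \<and>
     (\<forall>x y z. d (x + z) (y + z) = d x y) \<and>
     (\<forall>s. d_Cauchy d s \<longrightarrow> (\<exists>l. d_converges d s l)) \<and>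
     (\<forall>(a::nat \<Rightarrow> real) c s l. a \<longlonglongrightarrow> c \<longrightarrow> d_converges d s l \<longrightarrow>
         d_converges d (\<lambda>n. a n *\<^sub>R s n) (c *\<^sub>R l))"

definition nondecreasing_metric :: "('a::real_vector \<Rightarrow> 'a \<Rightarrow> real) \<Rightarrow> bool" where
  "nondecreasing_metric d \<longleftrightarrow> (\<forall>x (\<alpha>::real). 0 \<le> \<alpha> \<and> \<alpha> \<le> 1 \<longrightarrow> d (\<alpha> *\<^sub>R x) 0 \<le> d x 0)"

definition d_ball0 :: "('a::real_vector \<Rightarrow> 'a \<Rightarrow> real) \<Rightarrow> real \<Rightarrow> 'a set" where
  "d_ball0 d r = {y. d y 0 \<le> r}"

text \<open>Bounded in the topological vector space sense.\<close>
definition tvs_bounded :: "('a::real_vector \<Rightarrow> 'a \<Rightarrow> real) \<Rightarrow> 'a set \<Rightarrow> bool" where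
  "tvs_bounded d A \<longleftrightarrow> (\<forall>r>0. \<exists>t>0. A \<subseteq> (\<lambda>y. t *\<^sub>R y) ` d_ball0 d r)"

definition approximation_scheme ::
  "('a::real_vector \<Rightarrow> 'a \<Rightarrow> real) \<Rightarrow> (nat \<Rightarrow> 'a set) \<Rightarrow> bool" where
  "approximation_scheme d A \<longleftrightarrow>
     (\<forall>n. A n \<subset> A (Suc n)) \<and> (\<forall>n. A n \<noteq> UNIV) \<and>
     (\<exists>K::nat \<Rightarrow> nat. \<forall>n. K n \<ge> n \<and> {a + b | a b. a \<in> A n \<and> b \<in> A n} \<subseteq> A (K n)) \<and>
     (\<forall>n (t::real). \<forall>a\<in>A n. t *\<^sub>R a \<in> A n) \<and>
     (\<forall>x. \<forall>e>0. \<exists>n. \<exists>a\<in>A n. d x a < e)"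

definition best_approx_error :: "('a \<Rightarrow> 'a \<Rightarrow> real) \<Rightarrow> 'a \<Rightarrow> 'a set \<Rightarrow> real" where
  "best_approx_error d x A = (INF a\<in>A. d x a)"

definition satisfies_Shapiro :: "('a::real_vector \<Rightarrow> 'a \<Rightarrow> real) \<Rightarrow> (nat \<Rightarrow> 'a set) \<Rightarrow> bool" where
  "satisfies_Shapiro d A \<longleftrightarrow>
     (\<forall>\<epsilon>::nat \<Rightarrow> real. decseq \<epsilon> \<longrightarrow> (\<forall>n. 0 \<le> \<epsilon> n) \<longrightarrow> \<epsilon> \<longlonglongrightarrow> 0 \<longrightarrow>
        (\<exists>x. (\<lambda>n. best_approx_error d x (A n)) \<notin> O(\<epsilon>)))"

end

theory Submission
  imports Defs
begin

text \<open>Suppose some \<open>\<epsilon> n \<longrightarrow> 0\<close> dominates every error sequence \<open>E(y, A n)\<close>. The sets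
  \<open>{y. \<forall>n \<ge> N. E(y, A n) \<le> C \<epsilon> n}\<close> are closed and cover the complete space, so by Baire one
  of them contains a ball \<open>B(x\<^sub>0, r)\<close>. Since \<open>A n\<close> is symmetric and \<open>A n + A n \<subseteq> A (K n)\<close>,
  translating by \<open>-x\<^sub>0\<close> gives \<open>E(y, A (K n)) \<le> 2C \<epsilon> n\<close> on \<open>B(0, r)\<close>; a bounded set lies in
  some \<open>t B(0, r)\<close>, and for a non-decreasing metric dilating by \<open>t\<close> costs at most a factor \<open>\<lceil>t\<rceil>\<close>.
  So \<open>E(x k, A k) \<le> E(x k, A (K n))\<close> becomes small along \<open>N\<^sub>0\<close>, contradicting \<open>E(x k, A k) \<ge> c\<close>.\<close>

definition translation_invariant :: "('a::real_vector \<Rightarrow> 'a \<Rightarrow> real) \<Rightarrow> bool" where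
  "translation_invariant d \<longleftrightarrow> (\<forall>x y z. d (x + z) (y + z) = d x y)"

lemma is_metric_Metric_space: "is_metric d \<Longrightarrow> Metric_space UNIV d"
  unfolding is_metric_def by unfold_locales blast+

lemma metric_triangle: "is_metric d \<Longrightarrow> d x z \<le> d x y + d y z"
  by (simp add: is_metric_def)

lemma metric_commute: "is_metric d \<Longrightarrow> d x y = d y x"
  by (simp add: is_metric_def)

lemma metric_self: "is_metric d \<Longrightarrow> d x x = 0"
  by (simp add: is_metric_def)

lemma F_space_is_metric: "F_space d \<Longrightarrow> is_metric d"
  by (simp add: F_space_def)

lemma F_space_translation_invariant: "F_space d \<Longrightarrow> translation_invariant d"
  by (simp add: F_space_def translation_invariant_def)

lemma F_space_mcomplete:
  assumes "F_space d"
  shows "Metric_space.mcomplete UNIV d"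
proof -
  interpret Metric_space UNIV d
    using assms by (simp add: F_space_is_metric is_metric_Metric_space)
  show ?thesis
    unfolding mcomplete_def
  proof (intro allI impI)
    fix s assume "MCauchy s"
    then have "d_Cauchy d s"
      unfolding MCauchy_def d_Cauchy_def by (meson order.refl)
    then obtain l where "d_converges d s l"
      using assms by (auto simp: F_space_def)
    then show "\<exists>l. limitin mtopology s l sequentially"
      unfolding limitin_metric_dist_null d_converges_def by auto
  qed
qed

lemma translation_invariant_diff:
  "translation_invariant d \<Longrightarrow> d x y = d (x - y) (0::'a::real_vector)"
  unfolding translation_invariant_def by (metis diff_add_cancel add_0)

lemma translation_invariant_add_le:
  assumes "is_metric d" "translation_invariant d"
  shows "d (u + v) (a + b) \<le> d u a + d (v::'a::real_vector) b"
proof -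
  have "d (u + v) (a + b) \<le> d (u + v) (a + v) + d (a + v) (a + b)"
    by (rule metric_triangle[OF assms(1)])
  also have "\<dots> = d u a + d v b"
    using assms(2) unfolding translation_invariant_def by (metis add.commute)
  finally show ?thesis .
qed

lemma translation_invariant_uminus:
  assumes "is_metric d" "translation_invariant d"
  shows "d (- x) (- y) = d (x::'a::real_vector) y"
proof -
  have "d (- x) (- y) = d (y - x) 0"
    using translation_invariant_diff[OF assms(2), of "- x" "- y"] by simp
  also have "\<dots> = d y x" by (simp add: translation_invariant_diff[OF assms(2), of y x])
  finally show ?thesis by (simp add: metric_commute[OF assms(1)])
qed

lemma translation_invariant_scaleR_of_nat_le:
  assumes "is_metric d" "translation_invariant d"
  shows "d (real m *\<^sub>R z) 0 \<le> real m * d (z::'a::real_vector) 0"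
proof (induction m)
  case 0
  then show ?case by (simp add: metric_self[OF assms(1)])
next
  case (Suc m)
  have "d (real (Suc m) *\<^sub>R z) 0 \<le> d (real (Suc m) *\<^sub>R z) z + d z 0"
    by (rule metric_triangle[OF assms(1)])
  also have "d (real (Suc m) *\<^sub>R z) z = d (real m *\<^sub>R z) 0"
    using translation_invariant_diff[OF assms(2), of "real (Suc m) *\<^sub>R z" z]
    by (simp add: algebra_simps)
  finally show ?case using Suc by (simp add: algebra_simps)
qed

lemma nondecreasing_metric_scaleR_le:
  assumes "is_metric d" "translation_invariant d" "nondecreasing_metric d"
    and "0 \<le> t" "t \<le> real m"
  shows "d (t *\<^sub>R z) 0 \<le> real m * d (z::'a::real_vector) 0"
proof (cases "m = 0")
  case True
  then show ?thesis using assms(4,5) by (simp add: metric_self[OF assms(1)])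
next
  case False
  have "0 \<le> t / real m" "t / real m \<le> 1"
    using assms(4,5) False by (auto simp: divide_simps)
  then have "d ((t / real m) *\<^sub>R (real m *\<^sub>R z)) 0 \<le> d (real m *\<^sub>R z) 0"
    using assms(3) unfolding nondecreasing_metric_def by blast
  also have "\<dots> \<le> real m * d z 0"
    by (rule translation_invariant_scaleR_of_nat_le[OF assms(1,2)])
  finally show ?thesis using False by simp
qed

lemma best_approx_error_le_dist:
  assumes "is_metric d" "a \<in> B"
  shows "best_approx_error d x B \<le> d x a"
  unfolding best_approx_error_def
  by (rule cINF_lower) (use assms in \<open>auto simp: bdd_below_def is_metric_def\<close>)

lemma best_approx_error_greatest:
  assumes "B \<noteq> {}" "\<And>a. a \<in> B \<Longrightarrow> c \<le> d x a"
  shows "c \<le> best_approx_error d x B"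
  unfolding best_approx_error_def by (rule cINF_greatest) (use assms in auto)

text \<open>No nonemptiness is needed: for \<open>B = {}\<close> the error is the constant \<open>Inf {}\<close>.\<close>
lemma best_approx_error_le_dist_add:
  assumes "is_metric d"
  shows "best_approx_error d y B \<le> d y z + best_approx_error d z B"
proof (cases "B = {}")
  case True
  then show ?thesis
    using assms by (simp add: best_approx_error_def is_metric_def)
next
  case False
  have "best_approx_error d y B - d y z \<le> best_approx_error d z B"
  proof (rule best_approx_error_greatest[OF False])
    fix a assume "a \<in> B"
    have "best_approx_error d y B \<le> d y a"
      by (rule best_approx_error_le_dist[OF assms \<open>a \<in> B\<close>])
    also have "\<dots> \<le> d y z + d z a" by (rule metric_triangle[OF assms])
    finally show "best_approx_error d y B - d y z \<le> d z a" by simp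
  qed
  then show ?thesis by simp
qed

lemma best_approx_error_antimono:
  assumes "is_metric d" "B \<noteq> {}" "B \<subseteq> B'"
  shows "best_approx_error d x B' \<le> best_approx_error d x B"
  by (rule best_approx_error_greatest[OF assms(2)], rule best_approx_error_le_dist)
    (use assms in auto)

lemma best_approx_error_add_le:
  assumes "is_metric d" "translation_invariant d" "B \<noteq> {}"
    and "\<And>a b. a \<in> B \<Longrightarrow> b \<in> B \<Longrightarrow> a + b \<in> B'"
  shows "best_approx_error d (u + v) B'
           \<le> best_approx_error d (u::'a::real_vector) B + best_approx_error d v B"
proof -
  have "best_approx_error d (u + v) B' - best_approx_error d u B \<le> best_approx_error d v B"
  proof (rule best_approx_error_greatest[OF assms(3)])
    fix b assume b: "b \<in> B"
    have "best_approx_error d (u + v) B' - d v b \<le> best_approx_error d u B"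
    proof (rule best_approx_error_greatest[OF assms(3)])
      fix a assume a: "a \<in> B"
      have "best_approx_error d (u + v) B' \<le> d (u + v) (a + b)"
        by (rule best_approx_error_le_dist[OF assms(1) assms(4)[OF a b]])
      also have "\<dots> \<le> d u a + d v b" by (rule translation_invariant_add_le[OF assms(1,2)])
      finally show "best_approx_error d (u + v) B' - d v b \<le> d u a" by simp
    qed
    then show "best_approx_error d (u + v) B' - best_approx_error d u B \<le> d v b" by simp
  qed
  then show ?thesis by simp
qed

lemma best_approx_error_uminus_le:
  assumes "is_metric d" "translation_invariant d" "B \<noteq> {}"
    and "\<And>a. a \<in> B \<Longrightarrow> - a \<in> B"
  shows "best_approx_error d (- x) B \<le> best_approx_error d (x::'a::real_vector) B"
proof (rule best_approx_error_greatest[OF assms(3)])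
  fix a assume "a \<in> B"
  have "best_approx_error d (- x) B \<le> d (- x) (- a)"
    by (rule best_approx_error_le_dist[OF assms(1) assms(4)[OF \<open>a \<in> B\<close>]])
  then show "best_approx_error d (- x) B \<le> d x a"
    by (simp add: translation_invariant_uminus[OF assms(1,2)])
qed

lemma best_approx_error_scaleR_le:
  assumes "is_metric d" "translation_invariant d" "nondecreasing_metric d"
    and "0 \<le> t" "t \<le> real m" "B \<noteq> {}" "\<And>a s. a \<in> B \<Longrightarrow> s *\<^sub>R a \<in> B"
  shows "best_approx_error d (t *\<^sub>R y) B \<le> real m * best_approx_error d (y::'a::real_vector) B"
proof (cases "m = 0")
  case True
  obtain a where "a \<in> B" using assms(6) by blast
  have "best_approx_error d (t *\<^sub>R y) B \<le> d (t *\<^sub>R y) (0 *\<^sub>R a)"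
    by (rule best_approx_error_le_dist[OF assms(1) assms(7)[OF \<open>a \<in> B\<close>]])
  then show ?thesis using True assms(4,5) by (simp add: metric_self[OF assms(1)])
next
  case False
  have "best_approx_error d (t *\<^sub>R y) B / real m \<le> best_approx_error d y B"
  proof (rule best_approx_error_greatest[OF assms(6)])
    fix a assume "a \<in> B"
    have "best_approx_error d (t *\<^sub>R y) B \<le> d (t *\<^sub>R y) (t *\<^sub>R a)"
      by (rule best_approx_error_le_dist[OF assms(1) assms(7)[OF \<open>a \<in> B\<close>]])
    also have "\<dots> = d (t *\<^sub>R (y - a)) 0"
      using translation_invariant_diff[OF assms(2), of "t *\<^sub>R y" "t *\<^sub>R a"]
      by (simp add: scaleR_diff_right)
    also have "\<dots> \<le> real m * d (y - a) 0"
      by (rule nondecreasing_metric_scaleR_le[OF assms(1-5)])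
    also have "d (y - a) 0 = d y a"
      by (simp add: translation_invariant_diff[OF assms(2), of y a])
    finally show "best_approx_error d (t *\<^sub>R y) B / real m \<le> d y a"
      using False by (simp add: divide_simps mult.commute)
  qed
  then show ?thesis using False by (simp add: divide_simps mult.commute)
qed

lemma approximation_scheme_mono:
  assumes "approximation_scheme d A" "m \<le> n"
  shows "A m \<subseteq> A n"
proof -
  have "A k \<subseteq> A (Suc k)" for k
    using assms(1) by (simp add: approximation_scheme_def psubset_imp_subset)
  then show ?thesis using lift_Suc_mono_le[of A, OF _ assms(2)] by blast
qed

lemma approximation_scheme_nonempty:
  assumes "approximation_scheme d A" "0 < n"
  shows "A n \<noteq> {}"
proof -
  have "A 0 \<subset> A 1" using assms(1) by (simp add: approximation_scheme_def)
  then have "A 1 \<noteq> {}" by blast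
  then show ?thesis using approximation_scheme_mono[OF assms(1), of 1 n] assms(2) by auto
qed

lemma approximation_scheme_scaleR:
  "approximation_scheme d A \<Longrightarrow> a \<in> A n \<Longrightarrow> t *\<^sub>R a \<in> A n"
  by (simp add: approximation_scheme_def)

lemma approximation_scheme_uminus:
  "approximation_scheme d A \<Longrightarrow> a \<in> A n \<Longrightarrow> - a \<in> A n"
  using approximation_scheme_scaleR[of d A a n "-1"] by simp

lemma approximation_scheme_add_index:
  assumes "approximation_scheme d A"
  obtains K where "\<And>n. n \<le> K n" "\<And>n a b. a \<in> A n \<Longrightarrow> b \<in> A n \<Longrightarrow> a + b \<in> A (K n)"
proof -
  have "\<exists>K::nat \<Rightarrow> nat. \<forall>n. n \<le> K n \<and> {a + b | a b. a \<in> A n \<and> b \<in> A n} \<subseteq> A (K n)"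
    using assms unfolding approximation_scheme_def by (elim conjE)
  then obtain K :: "nat \<Rightarrow> nat"
    where K: "\<And>n. n \<le> K n" "\<And>n. {a + b | a b. a \<in> A n \<and> b \<in> A n} \<subseteq> A (K n)"
    by blast
  show thesis
  proof (rule that)
    show "n \<le> K n" for n by (rule K(1))
    show "a + b \<in> A (K n)" if "a \<in> A n" "b \<in> A n" for n a b
      using K(2)[of n] that by blast
  qed
qed

text \<open>By Baire, one of the closed sets \<open>{y. \<forall>n\<ge>N. E n y \<le> C * \<epsilon> n}\<close> covering \<open>M\<close> has interior.\<close>
lemma (in Metric_space) mcomplete_bigO_uniform_on_mball:
  fixes E :: "nat \<Rightarrow> 'a \<Rightarrow> real" and \<epsilon> :: "nat \<Rightarrow> real"
  assumes "mcomplete" "M \<noteq> {}"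
    and lipschitz: "\<And>n y z. y \<in> M \<Longrightarrow> z \<in> M \<Longrightarrow> E n y \<le> d y z + E n z"
    and bigO: "\<And>y. y \<in> M \<Longrightarrow> (\<lambda>n. E n y) \<in> O(\<epsilon>)"
    and nonneg: "\<And>n. 0 \<le> \<epsilon> n"
  obtains x\<^sub>0 r C N where "r > 0" "\<And>z n. z \<in> mball x\<^sub>0 r \<Longrightarrow> N \<le> n \<Longrightarrow> E n z \<le> C * \<epsilon> n"
proof -
  define S where "S = (\<lambda>(C::nat, N::nat). {y \<in> M. \<forall>n\<ge>N. E n y \<le> real C * \<epsilon> n})"
  have cover: "\<Union>(range S) = M"
  proof (intro equalityI subsetI)
    fix y assume "y \<in> M"
    obtain C where "eventually (\<lambda>n. norm (E n y) \<le> C * norm (\<epsilon> n)) sequentially"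
      using bigO[OF \<open>y \<in> M\<close>] by (elim landau_o.bigE)
    then obtain N where N: "\<And>n. N \<le> n \<Longrightarrow> E n y \<le> C * \<epsilon> n"
      unfolding eventually_sequentially using nonneg by fastforce
    have "E n y \<le> real (nat \<lceil>C\<rceil>) * \<epsilon> n" if "N \<le> n" for n
      using N[OF that] mult_right_mono[OF real_nat_ceiling_ge nonneg] by (meson order.trans)
    then show "y \<in> \<Union>(range S)" using \<open>y \<in> M\<close> unfolding S_def by blast
  qed (auto simp: S_def)
  have closed: "closedin mtopology (S p)" for p
    unfolding closedin_metric
  proof (intro conjI allI impI)
    obtain C N where p: "p = (C, N)" by fastforce
    fix y assume "y \<in> M - S p"
    then obtain n where n: "N \<le> n" "E n y > real C * \<epsilon> n" "y \<in> M"
      unfolding S_def p by (auto simp: not_le)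
    show "\<exists>r>0. disjnt (S p) (mball y r)"
    proof (intro exI conjI)
      show "E n y - real C * \<epsilon> n > 0" using n by simp
      show "disjnt (S p) (mball y (E n y - real C * \<epsilon> n))"
        using lipschitz[of y _ n] n unfolding disjnt_def S_def p by fastforce
    qed
  qed (auto simp: S_def)
  have "\<exists>p. mtopology interior_of S p \<noteq> {}"
  proof (rule ccontr)
    assume "\<nexists>p. mtopology interior_of S p \<noteq> {}"
    then have "mtopology interior_of \<Union>(range S) = {}"
      using closed by (intro metric_Baire_category_alt[OF \<open>mcomplete\<close>]) auto
    then show False using cover \<open>M \<noteq> {}\<close> by (metis interior_of_topspace topspace_mtopology)
  qed
  then obtain p x\<^sub>0 r where "r > 0" and ball: "mball x\<^sub>0 r \<subseteq> S p"
    by (meson all_not_in_conv interior_of_subset openin_interior_of openin_mtopology subset_trans)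
  obtain C N where p: "p = (C, N)" by fastforce
  show ?thesis
  proof (rule that)
    show "r > 0" by fact
    show "\<And>z n. z \<in> mball x\<^sub>0 r \<Longrightarrow> N \<le> n \<Longrightarrow> E n z \<le> real C * \<epsilon> n"
      using ball unfolding S_def p by auto
  qed
qed

text \<open>The ball \<open>B(x\<^sub>0, r)\<close> is moved to \<open>B(0, r)\<close> at the price of passing from \<open>A n\<close> to
  \<open>A (K n)\<close>, and then dilated over a bounded set.\<close>
lemma approximation_scheme_bigO_on_bounded:
  assumes "F_space d" "nondecreasing_metric d" "approximation_scheme d A" "tvs_bounded d S"
    and "r > 0"
    and near: "\<And>z n. d x\<^sub>0 z < r \<Longrightarrow> N \<le> n \<Longrightarrow> best_approx_error d z (A n) \<le> C * \<epsilon> n"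
  obtains K L where "\<And>n. n \<le> K n"
    "\<And>s n. s \<in> S \<Longrightarrow> N \<le> n \<Longrightarrow> 0 < n \<Longrightarrow> best_approx_error d s (A (K n)) \<le> L * \<epsilon> n"
proof -
  have met: "is_metric d" and ti: "translation_invariant d"
    using assms(1) by (simp_all add: F_space_is_metric F_space_translation_invariant)
  obtain K where K: "\<And>n. n \<le> K n" "\<And>n a b. a \<in> A n \<Longrightarrow> b \<in> A n \<Longrightarrow> a + b \<in> A (K n)"
    using approximation_scheme_add_index[OF assms(3)] by blast
  have "r/2 > 0" using \<open>r > 0\<close> by simp
  then obtain t where "t > 0" and t: "S \<subseteq> (\<lambda>y. t *\<^sub>R y) ` d_ball0 d (r/2)"
    using assms(4) unfolding tvs_bounded_def by blast
  define m where "m = nat \<lceil>t\<rceil>"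
  have "best_approx_error d s (A (K n)) \<le> real m * (2 * C) * \<epsilon> n"
    if "s \<in> S" "N \<le> n" "0 < n" for s n
  proof -
    obtain y where y: "s = t *\<^sub>R y" "d y 0 \<le> r/2"
      using t \<open>s \<in> S\<close> unfolding d_ball0_def by blast
    have An: "A n \<noteq> {}" and AKn: "A (K n) \<noteq> {}"
      using approximation_scheme_nonempty[OF assms(3)] K(1)[of n] \<open>0 < n\<close> by auto
    have "d x\<^sub>0 (y + x\<^sub>0) < r"
      using y(2) \<open>r > 0\<close> translation_invariant_diff[OF ti, of "y + x\<^sub>0" x\<^sub>0] metric_commute[OF met, of x\<^sub>0]
      by simp
    then have "best_approx_error d (y + x\<^sub>0) (A n) \<le> C * \<epsilon> n" using near \<open>N \<le> n\<close> by blast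
    moreover have "best_approx_error d x\<^sub>0 (A n) \<le> C * \<epsilon> n"
      using near \<open>N \<le> n\<close> \<open>r > 0\<close> by (simp add: metric_self[OF met])
    moreover have "best_approx_error d y (A (K n))
        \<le> best_approx_error d (y + x\<^sub>0) (A n) + best_approx_error d (- x\<^sub>0) (A n)"
      using best_approx_error_add_le[OF met ti An K(2), where u="y + x\<^sub>0" and v="- x\<^sub>0"] by simp
    moreover have "best_approx_error d (- x\<^sub>0) (A n) \<le> best_approx_error d x\<^sub>0 (A n)"
      by (rule best_approx_error_uminus_le[OF met ti An approximation_scheme_uminus[OF assms(3)]])
    ultimately have Ey: "best_approx_error d y (A (K n)) \<le> 2 * C * \<epsilon> n" by linarith
    have "best_approx_error d s (A (K n)) \<le> real m * best_approx_error d y (A (K n))"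
      unfolding y(1) m_def using \<open>t > 0\<close>
      by (intro best_approx_error_scaleR_le[OF met ti assms(2) _ _ AKn]
          approximation_scheme_scaleR[OF assms(3)]) (auto simp: real_nat_ceiling_ge)
    also have "\<dots> \<le> real m * (2 * C * \<epsilon> n)" using Ey by (rule mult_left_mono) simp
    finally show ?thesis by (simp add: mult.assoc)
  qed
  then show ?thesis by (rule that[OF K(1)])
qed

theorem mainTheorem4:
  fixes d :: "'a::real_vector \<Rightarrow> 'a \<Rightarrow> real"
    and A :: "nat \<Rightarrow> 'a set"
    and N0 :: "nat set"
    and x :: "nat \<Rightarrow> 'a"
    and c :: real
  assumes "F_space d"
    and "nondecreasing_metric d"
    and "approximation_scheme d A"
    and "infinite N0"
    and "tvs_bounded d (x ` N0)"
    and "c > 0"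
    and "\<forall>n\<in>N0. c \<le> best_approx_error d (x n) (A n)"
  shows "satisfies_Shapiro d A"
  unfolding satisfies_Shapiro_def
proof (intro allI impI, rule ccontr)
  fix \<epsilon> :: "nat \<Rightarrow> real"
  assume "decseq \<epsilon>" "\<forall>n. 0 \<le> \<epsilon> n" "\<epsilon> \<longlonglongrightarrow> 0" "\<nexists>y. (\<lambda>n. best_approx_error d y (A n)) \<notin> O(\<epsilon>)"
  have met: "is_metric d" using assms(1) by (rule F_space_is_metric)
  interpret Metric_space UNIV d using met by (rule is_metric_Metric_space)
  obtain x\<^sub>0 r C N where "r > 0"
    and near: "\<And>z n. z \<in> mball x\<^sub>0 r \<Longrightarrow> N \<le> n \<Longrightarrow> best_approx_error d z (A n) \<le> C * \<epsilon> n"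
    by (rule mcomplete_bigO_uniform_on_mball[of "\<lambda>n y. best_approx_error d y (A n)" \<epsilon>])
      (use F_space_mcomplete[OF assms(1)] met best_approx_error_le_dist_add
        \<open>\<nexists>y. _\<close> \<open>\<forall>n. 0 \<le> \<epsilon> n\<close> in auto)
  obtain K L where K: "\<And>n. n \<le> K n" and bound:
    "\<And>s n. s \<in> x ` N0 \<Longrightarrow> N \<le> n \<Longrightarrow> 0 < n \<Longrightarrow> best_approx_error d s (A (K n)) \<le> L * \<epsilon> n"
    by (rule approximation_scheme_bigO_on_bounded[OF assms(1,2,3,5) \<open>r > 0\<close>])
      (use near in auto)
  have "eventually (\<lambda>n. L * \<epsilon> n < c) sequentially"
    using tendsto_mult_right_zero[OF \<open>\<epsilon> \<longlonglongrightarrow> 0\<close>, of L] \<open>c > 0\<close> by (simp add: order_tendstoD)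
  then have "eventually (\<lambda>n. L * \<epsilon> n < c \<and> Suc N \<le> n) sequentially"
    using eventually_ge_at_top by (rule eventually_conj)
  then obtain n where n: "L * \<epsilon> n < c" "Suc N \<le> n"
    using eventually_happens'[OF sequentially_bot] by blast
  obtain k where k: "k \<in> N0" "K n \<le> k"
    using assms(4) by (meson infinite_nat_iff_unbounded_le)
  have "A (K n) \<noteq> {}"
    using approximation_scheme_nonempty[OF assms(3), of "K n"] K[of n] n(2) by simp
  have "c \<le> best_approx_error d (x k) (A k)" using assms(7) k(1) by blast
  also have "\<dots> \<le> best_approx_error d (x k) (A (K n))"
    by (rule best_approx_error_antimono[OF met \<open>A (K n) \<noteq> {}\<close>
          approximation_scheme_mono[OF assms(3) k(2)]])
  also have "\<dots> \<le> L * \<epsilon> n" using bound[of "x k" n] k(1) n(2) by simp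
  finally show False using n(1) by simp
qed

end
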